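(* Assume that for all $0\le i,j\le d$: $E^*_iAE^*_j=0$ if $i-j>1$, and $E^*_iAE^*_j\ne0$ if $i-j=1$. Let $v^*_0$ be a nonzero vector in $E^*_0V$. Then the $\mathbb K$-linear map $\mathcal D\to V$, $X\mapsto Xv^*_0$, is an isomorphism of $\mathbb K$-vector spaces.
   Context: Let $\mathbb K$ be a field, $d\ge 0$ an integer, and $\mathcal A$ a $\mathbb K$-algebra isomorphic to $\mathrm{Mat}_{d+1}(\mathbb K)$, with identity $I$. An element of $\mathcal A$ is multiplicity-free if it has $d+1$ mutually distinct eigenvalues, all in $\mathbb K$; for such $A$ with eigenvalues $\theta_0,\ldots,\theta_d$, the primitive idempotent associated with $\theta_i$ is $E_i=\prod_{j\ne i}(A-\theta_jI)/(\theta_i-\theta_j)$. Standing setup: $A,A^*$ are multiplicity-free elements of $\mathcal A$ ($A^*$ is just a name, not an adjoint); $E_0,\ldots,E_d$ is an ordering of the primitive idempotents of $A$; $E^*_0,\ldots,E^*_d$ is an ordering of the primitive idempotents of $A^*$; $\mathcal D$ is the subalgebra of $\mathcal A$ generated by $A$; $V$ is an irreducible left $\mathcal A$-module. *)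

theory Defs
  imports "HOL-Analysis.Analysis" "HOL-Computational_Algebra.Polynomial"
begin

text \<open>The algebra is modelled concretely as the (d+1) x (d+1) matrices over a field K,
  with index type 'n and CARD('n) = d+1; matrix product is (**), identity is mat 1,
  and the scalar multiple c X is written mat c ** X.\<close>

primrec mat_pow :: "('a::semiring_1)^'n^'n \<Rightarrow> nat \<Rightarrow> 'a^'n^'n" where
  "mat_pow X 0 = mat 1"
| "mat_pow X (Suc k) = X ** mat_pow X k"

definition poly_mat :: "('a::field) poly \<Rightarrow> 'a^'n^'n \<Rightarrow> 'a^'n^'n" where
  "poly_mat p X = (\<Sum>k\<le>degree p. mat (coeff p k) ** mat_pow X k)"

definition gen_subalg :: "('a::field)^'n^'n \<Rightarrow> ('a^'n^'n) set" where
  "gen_subalg X = {poly_mat p X | p. True}"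

definition mf_eigs :: "('a::field)^'n^'n \<Rightarrow> (nat \<Rightarrow> 'a) \<Rightarrow> bool" where
  "mf_eigs X \<theta> \<longleftrightarrow> inj_on \<theta> {..<CARD('n)} \<and>
     (\<forall>i<CARD('n). \<exists>v. v \<noteq> 0 \<and> X *v v = \<theta> i *s v)"

definition multiplicity_free :: "('a::field)^'n^'n \<Rightarrow> bool" where
  "multiplicity_free X \<longleftrightarrow> (\<exists>\<theta>. mf_eigs X \<theta>)"

text \<open>Primitive idempotent E_i = prod_{j /= i} (X - theta_j I)/(theta_i - theta_j).
  (The factors commute, so the order of the product is irrelevant.)\<close>
definition prim_idem :: "('a::field)^'n^'n \<Rightarrow> (nat \<Rightarrow> 'a) \<Rightarrow> nat \<Rightarrow> 'a^'n^'n" where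
  "prim_idem X \<theta> i =
     foldr (\<lambda>j M. (mat (inverse (\<theta> i - \<theta> j)) ** (X - mat (\<theta> j))) ** M)
       (filter (\<lambda>j. j \<noteq> i) [0..<CARD('n)]) (mat 1)"

definition idem_ordering :: "('a::field)^'n^'n \<Rightarrow> (nat \<Rightarrow> 'a^'n^'n) \<Rightarrow> bool" where
  "idem_ordering X E \<longleftrightarrow>
     (\<exists>\<theta>. mf_eigs X \<theta> \<and> (\<forall>i<CARD('n). E i = prim_idem X \<theta> i))"

text \<open>V (the universe of type 'v) is a left module over the matrix algebra via act,
  with underlying K-vector space structure given by sc.\<close>
definition alg_module ::
  "('a::field \<Rightarrow> 'v::ab_group_add \<Rightarrow> 'v) \<Rightarrow> ('a^'n^'n \<Rightarrow> 'v \<Rightarrow> 'v) \<Rightarrow> bool" where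
  "alg_module sc act \<longleftrightarrow> vector_space sc \<and>
     (\<forall>X Y v. act (X ** Y) v = act X (act Y v)) \<and>
     (\<forall>v. act (mat 1) v = v) \<and>
     (\<forall>X Y v. act (X + Y) v = act X v + act Y v) \<and>
     (\<forall>X u w. act X (u + w) = act X u + act X w) \<and>
     (\<forall>c X v. act (mat c ** X) v = sc c (act X v)) \<and>
     (\<forall>c X v. act X (sc c v) = sc c (act X v))"

definition irreducible_module ::
  "('a::field \<Rightarrow> 'v::ab_group_add \<Rightarrow> 'v) \<Rightarrow> ('a^'n^'n \<Rightarrow> 'v \<Rightarrow> 'v) \<Rightarrow> bool" where
  "irreducible_module sc act \<longleftrightarrow> alg_module sc act \<and> (\<exists>v::'v. v \<noteq> 0) \<and>
     (\<forall>W. 0 \<in> W \<and> (\<forall>u\<in>W. \<forall>w\<in>W. u + w \<in> W) \<and> (\<forall>X. \<forall>w\<in>W. act X w \<in> W)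
          \<longrightarrow> W = {0} \<or> W = UNIV)"

end

theory Submission
  imports Defs
begin

text \<open>Write \<open>F\<close> for \<open>Es 0\<close>. The \<open>Es i\<close> are orthogonal rank-one idempotents summing
  to the identity, and \<open>A\<close> is lower Hessenberg with nonzero subdiagonal with respect to them, so
  \<open>Es j A\<^sup>k F\<close> vanishes for \<open>j > k\<close> and is nonzero for \<open>j = k\<close>. Since the space
  \<open>Es j \<A> F\<close> is one-dimensional, induction over \<open>j\<close> shows that every \<open>M F\<close> equals
  \<open>X F\<close> for some \<open>X\<close> in the algebra \<open>\<D>\<close> generated by \<open>A\<close>. As \<open>v\<^sub>0 = F v\<^sub>0\<close> and
  \<open>V = \<A> v\<^sub>0\<close> by irreducibility, this gives \<open>V = \<D> v\<^sub>0\<close>. If \<open>X v\<^sub>0 = 0\<close> with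
  \<open>X \<in> \<D>\<close>, then \<open>X F = 0\<close>, for otherwise some \<open>Q X F = F\<close> would give \<open>v\<^sub>0 = 0\<close>; and then,
  \<open>\<D>\<close> being commutative, \<open>X M F = X Y F = Y X F = 0\<close> for all \<open>M\<close>, forcing \<open>X = 0\<close>.\<close>

lemma matrix_add_rdistrib: "((A::'a::semiring_1^'n^'m) + B) ** C = A ** C + B ** C"
  by (vector matrix_matrix_mult_def sum.distrib distrib_right)

lemma matrix_diff_rdistrib: "((A::'a::ring_1^'n^'m) - B) ** C = A ** C - B ** C"
  by (vector matrix_matrix_mult_def sum_subtractf left_diff_distrib)

lemma matrix_mult_sum_left: "sum f S ** (M::'a::semiring_1^'p^'n) = (\<Sum>x\<in>S. f x ** M)"
  by (induction S rule: infinite_finite_induct) (simp_all add: matrix_add_rdistrib)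

lemma matrix_mult_sum_right: "(M::'a::semiring_1^'n^'m) ** sum f S = (\<Sum>x\<in>S. M ** f x)"
  by (induction S rule: infinite_finite_induct) (simp_all add: matrix_add_ldistrib)

lemma matrix_vector_mult_sum_left: "sum f S *v (v::'a::semiring_1^'n) = (\<Sum>x\<in>S. f x *v v)"
  by (induction S rule: infinite_finite_induct) (simp_all add: matrix_vector_mult_add_rdistrib)

lemma matrix_vector_mult_sum_right: "(M::'a::semiring_1^'n^'m) *v sum f S = (\<Sum>x\<in>S. M *v f x)"
  by (induction S rule: infinite_finite_induct) (simp_all add: matrix_vector_right_distrib)

lemma mat_mult_left: "mat c ** (X::'a::comm_semiring_1^'n^'m) = (\<chi> i j. c * X$i$j)"
  by (simp add: matrix_matrix_mult_def mat_def vec_eq_iff if_distrib if_distribR sum.delta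
      cong: if_cong)

lemma mat_mult_right: "(X::'a::comm_semiring_1^'n^'m) ** mat c = (\<chi> i j. c * X$i$j)"
  by (simp add: matrix_matrix_mult_def mat_def vec_eq_iff if_distrib if_distribR sum.delta'
      mult.commute cong: if_cong)

lemma mat_mult_commute: "mat c ** (X::'a::comm_semiring_1^'n^'n) = X ** mat c"
  by (simp only: mat_mult_left mat_mult_right)

lemma mat_mult_mat: "mat c ** mat c' = (mat (c * c') :: 'a::comm_semiring_1^'n^'n)"
  unfolding mat_mult_left by (simp add: mat_def vec_eq_iff)

lemma matrix_mult_mat_left_commute:
  "(X::'a::comm_semiring_1^'n^'n) ** (mat c ** Y) = mat c ** (X ** Y)"
  by (metis mat_mult_commute matrix_mul_assoc)

lemma mat_add: "mat (a + b) = (mat a + mat b :: 'a::comm_ring_1^'n^'n)"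
  by (vector mat_def)

lemma mat_diff: "mat (a - b) = (mat a - mat b :: 'a::comm_ring_1^'n^'n)"
  by (vector mat_def)

lemma mat_mult_vector: "mat c *v (v::'a::comm_semiring_1^'n) = c *s v"
  by (simp add: matrix_vector_mult_def mat_def vec_eq_iff if_distrib if_distribR sum.delta
      cong: if_cong)

lemma matrix_sandwich_neq_0:
  fixes M N :: "'a::field^'n^'n"
  assumes "M \<noteq> 0" "N \<noteq> 0"
  obtains P where "M ** P ** N \<noteq> 0"
proof -
  obtain a b where ab: "M$a$b \<noteq> 0" using assms(1) by (metis vec_eq_iff zero_index)
  obtain c e where ce: "N$c$e \<noteq> 0" using assms(2) by (metis vec_eq_iff zero_index)
  define P :: "'a^'n^'n" where "P = (\<chi> i j. if i = b \<and> j = c then 1 else 0)"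
  have "M ** P = (\<chi> i k. if k = c then M$i$b else 0)"
    by (simp add: P_def matrix_matrix_mult_def vec_eq_iff if_distrib if_distribR sum.delta'
        cong: if_cong)
  then have "(M ** P ** N)$a$e = M$a$b * N$c$e"
    by (simp add: matrix_matrix_mult_def if_distrib if_distribR sum.delta' cong: if_cong)
  then show ?thesis using that ab ce by (metis mult_eq_0_iff zero_index)
qed

section \<open>Minimal idempotents\<close>

text \<open>In a full matrix algebra these are exactly the idempotents of rank one.\<close>

definition minimal_idempotent :: "('a::field)^'n^'n \<Rightarrow> bool" where
  "minimal_idempotent E \<longleftrightarrow> E \<noteq> 0 \<and> E ** E = E \<and> (\<forall>M. \<exists>c. E ** M ** E = mat c ** E)"

lemma minimal_idempotent_left_inverse:
  fixes F N :: "'a::field^'n^'n"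
  assumes F: "minimal_idempotent F" and N: "N ** F = N" "N \<noteq> 0"
  obtains Q where "Q ** N = F"
proof -
  have "F \<noteq> 0" using F by (simp add: minimal_idempotent_def)
  then obtain P where P: "F ** P ** N \<noteq> 0" by (rule matrix_sandwich_neq_0[OF _ N(2)])
  obtain c where c: "F ** (P ** N) ** F = mat c ** F"
    using F by (auto simp: minimal_idempotent_def)
  have FPN: "F ** P ** N = mat c ** F"
    using c N(1) by (metis matrix_mul_assoc)
  then have "c \<noteq> 0" using P by auto
  have "(mat (inverse c) ** F ** P) ** N = mat (inverse c) ** (mat c ** F)"
    by (metis matrix_mul_assoc FPN)
  also have "\<dots> = F" using \<open>c \<noteq> 0\<close> by (simp add: matrix_mul_assoc mat_mult_mat)
  finally show ?thesis by (rule that)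
qed

lemma minimal_idempotent_mult_neq_0:
  fixes E M N :: "'a::field^'n^'n"
  assumes E: "minimal_idempotent E" and M: "M ** E = M" "M \<noteq> 0" and N: "E ** N = N" "N \<noteq> 0"
  shows "M ** N \<noteq> 0"
proof
  assume "M ** N = 0"
  obtain Q where "Q ** M = E" using E M by (rule minimal_idempotent_left_inverse)
  then have "N = Q ** (M ** N)" using N(1) by (simp add: matrix_mul_assoc)
  with \<open>M ** N = 0\<close> N(2) show False by simp
qed

lemma minimal_idempotent_corner_scalar:
  fixes E F M N :: "'a::field^'n^'n"
  assumes E: "minimal_idempotent E" and F: "minimal_idempotent F"
    and N: "E ** N ** F = N" "N \<noteq> 0"
  obtains c where "E ** M ** F = mat c ** N"
proof -
  have EE: "E ** E = E" and FF: "F ** F = F" using E F by (simp_all add: minimal_idempotent_def)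
  have EN: "E ** N = N" using N(1) EE by (metis matrix_mul_assoc)
  have "N ** F = N" using N(1) FF by (metis matrix_mul_assoc)
  then obtain Q where Q: "Q ** N = F" using F N(2) by (metis minimal_idempotent_left_inverse)
  obtain c where c: "E ** (M ** F ** Q) ** E = mat c ** E"
    using E by (auto simp: minimal_idempotent_def)
  have "E ** M ** F = E ** (M ** F ** Q) ** E ** N"
    using FF Q EN by (metis matrix_mul_assoc)
  also have "\<dots> = mat c ** N" using c EN by (metis matrix_mul_assoc)
  finally show ?thesis by (rule that)
qed

lemma alg_module_act_zero_left:
  assumes "alg_module sc act" shows "act 0 v = 0"
proof -
  have "act (0 + 0) v = act 0 v + act 0 v" using assms unfolding alg_module_def by blast
  then show ?thesis by simp
qed

lemma alg_module_act_zero_right: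
  assumes "alg_module sc act" shows "act X 0 = 0"
proof -
  have "act X (0 + 0) = act X 0 + act X 0" using assms unfolding alg_module_def by blast
  then show ?thesis by simp
qed

lemma alg_module_act_diff:
  assumes "alg_module sc act" shows "act (X - Y) v = act X v - act Y v"
proof -
  have "act (X - Y + Y) v = act (X - Y) v + act Y v" using assms unfolding alg_module_def by blast
  then show ?thesis by (simp add: eq_diff_eq)
qed

lemma alg_module_act_mult: "alg_module sc act \<Longrightarrow> act (X ** Y) v = act X (act Y v)"
  by (simp add: alg_module_def)

lemma irreducible_module_cyclic:
  assumes V: "irreducible_module sc act" and "v \<noteq> 0"
  shows "range (\<lambda>M. act M v) = UNIV"
proof -
  have alg: "alg_module sc act" using V by (simp add: irreducible_module_def)
  let ?W = "range (\<lambda>M. act M v)"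
  have "act 0 v \<in> ?W" by (rule rangeI)
  then have "0 \<in> ?W" by (simp add: alg_module_act_zero_left[OF alg])
  moreover have "\<forall>u\<in>?W. \<forall>w\<in>?W. u + w \<in> ?W"
  proof clarify
    fix M M'
    have "act M v + act M' v = act (M + M') v" using alg by (simp add: alg_module_def)
    then show "act M v + act M' v \<in> ?W" by simp
  qed
  moreover have "\<forall>X. \<forall>w\<in>?W. act X w \<in> ?W"
  proof clarify
    fix X M
    have "act X (act M v) = act (X ** M) v" by (simp add: alg_module_act_mult[OF alg])
    then show "act X (act M v) \<in> ?W" by simp
  qed
  ultimately have "?W = {0} \<or> ?W = UNIV" using V by (simp add: irreducible_module_def)
  moreover have "v \<in> ?W"
  proof -
    have "act (mat 1) v = v" using alg unfolding alg_module_def by blast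
    then show ?thesis by (metis rangeI)
  qed
  ultimately show ?thesis using \<open>v \<noteq> 0\<close> by blast
qed

lemma alg_module_act_idempotent:
  assumes "alg_module sc act" "F ** F = F" "v \<in> range (act F)"
  shows "act F v = v"
  using assms by (auto simp flip: alg_module_act_mult[OF assms(1)])

lemma irreducible_module_act_image_eq_UNIV:
  assumes V: "irreducible_module sc act" and F: "F ** F = F"
    and v0: "v0 \<noteq> 0" "v0 \<in> range (act F)"
    and column: "\<And>M. \<exists>X\<in>D. M ** F = X ** F"
  shows "(\<lambda>X. act X v0) ` D = UNIV"
proof -
  have alg: "alg_module sc act" using V by (simp add: irreducible_module_def)
  have "act M v0 \<in> (\<lambda>X. act X v0) ` D" for M
  proof -
    obtain X where "X \<in> D" "M ** F = X ** F" using column by blast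
    then show ?thesis
      using alg_module_act_idempotent[OF alg F v0(2)] by (metis alg_module_act_mult[OF alg] image_eqI)
  qed
  then have "range (\<lambda>M. act M v0) \<subseteq> (\<lambda>X. act X v0) ` D" by blast
  then show ?thesis using irreducible_module_cyclic[OF V v0(1)] by (simp add: top_unique)
qed

lemma alg_module_inj_on_act:
  fixes D :: "('a::field^'n^'n) set"
  assumes alg: "alg_module sc act" and F: "minimal_idempotent F"
    and v0: "v0 \<noteq> 0" "v0 \<in> range (act F)"
    and diff: "\<And>X Y. X \<in> D \<Longrightarrow> Y \<in> D \<Longrightarrow> X - Y \<in> D"
    and comm: "\<And>X Y. X \<in> D \<Longrightarrow> Y \<in> D \<Longrightarrow> X ** Y = Y ** X"
    and column: "\<And>M. \<exists>X\<in>D. M ** F = X ** F"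
  shows "inj_on (\<lambda>X. act X v0) D"
proof (rule inj_onI)
  fix X Y assume XY: "X \<in> D" "Y \<in> D" "act X v0 = act Y v0"
  let ?Z = "X - Y"
  have Z: "?Z \<in> D" "act ?Z v0 = 0"
    using XY diff by (simp_all add: alg_module_act_diff[OF alg])
  have FF: "F ** F = F" using F by (simp add: minimal_idempotent_def)
  have "?Z ** F = 0"
  proof (rule ccontr)
    assume "?Z ** F \<noteq> 0"
    moreover have "?Z ** F ** F = ?Z ** F" by (simp flip: matrix_mul_assoc add: FF)
    ultimately obtain Q where "Q ** (?Z ** F) = F" using F by (metis minimal_idempotent_left_inverse)
    then have "v0 = act Q (act ?Z v0)"
      using alg_module_act_idempotent[OF alg FF v0(2)] by (metis alg_module_act_mult[OF alg])
    then show False using Z(2) v0(1) by (simp add: alg_module_act_zero_right[OF alg])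
  qed
  have "?Z ** M ** F = 0" for M
  proof -
    obtain W where "W \<in> D" "M ** F = W ** F" using column by blast
    then show ?thesis using comm[OF Z(1)] \<open>?Z ** F = 0\<close> by (metis matrix_mul_assoc times0_right)
  qed
  then have "?Z = 0" using F by (metis matrix_sandwich_neq_0 minimal_idempotent_def)
  then show "X = Y" by simp
qed

lemma poly_mat_eq_sum_atMost:
  assumes "degree p \<le> N"
  shows "poly_mat p X = (\<Sum>k\<le>N. mat (coeff p k) ** mat_pow X k)"
  unfolding poly_mat_def
  by (rule sum.mono_neutral_left) (use assms in \<open>auto simp: coeff_eq_0\<close>)

lemma poly_mat_add: "poly_mat (p + q) X = poly_mat p X + poly_mat q X"
proof -
  let ?N = "max (degree p) (degree q)"
  have "poly_mat (p + q) X = (\<Sum>k\<le>?N. mat (coeff (p + q) k) ** mat_pow X k)"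
    by (rule poly_mat_eq_sum_atMost) (simp add: degree_add_le)
  also have "\<dots> = (\<Sum>k\<le>?N. mat (coeff p k) ** mat_pow X k) + (\<Sum>k\<le>?N. mat (coeff q k) ** mat_pow X k)"
    by (simp add: mat_add matrix_add_rdistrib sum.distrib)
  also have "\<dots> = poly_mat p X + poly_mat q X"
    by (simp add: poly_mat_eq_sum_atMost[symmetric])
  finally show ?thesis .
qed

lemma poly_mat_diff: "poly_mat (p - q) X = poly_mat p X - poly_mat q X"
proof -
  let ?N = "max (degree p) (degree q)"
  have "poly_mat (p - q) X = (\<Sum>k\<le>?N. mat (coeff (p - q) k) ** mat_pow X k)"
    by (rule poly_mat_eq_sum_atMost) (simp add: degree_diff_le)
  also have "\<dots> = (\<Sum>k\<le>?N. mat (coeff p k) ** mat_pow X k) - (\<Sum>k\<le>?N. mat (coeff q k) ** mat_pow X k)"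
    by (simp add: mat_diff matrix_diff_rdistrib sum_subtractf)
  also have "\<dots> = poly_mat p X - poly_mat q X"
    by (simp add: poly_mat_eq_sum_atMost[symmetric])
  finally show ?thesis .
qed

lemma poly_mat_smult: "poly_mat (smult c p) X = mat c ** poly_mat p X"
proof -
  have "poly_mat (smult c p) X = (\<Sum>k\<le>degree p. mat (coeff (smult c p) k) ** mat_pow X k)"
    by (rule poly_mat_eq_sum_atMost) (simp add: degree_smult_le)
  also have "\<dots> = mat c ** poly_mat p X"
    by (simp add: poly_mat_def matrix_mult_sum_right matrix_mul_assoc mat_mult_mat)
  finally show ?thesis .
qed

lemma poly_mat_monom: "poly_mat (monom 1 m) X = mat_pow X m"
proof -
  have "poly_mat (monom 1 m) X = (\<Sum>k\<le>m. mat (coeff (monom 1 m) k) ** mat_pow X k)"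
    by (rule poly_mat_eq_sum_atMost) (simp add: degree_monom_le)
  also have "\<dots> = mat_pow X m" by (simp add: coeff_monom if_distrib if_distribR cong: if_cong)
  finally show ?thesis .
qed

lemma mat_pow_add: "mat_pow X (k + l) = mat_pow X k ** mat_pow X l"
  by (induction k) (simp_all add: matrix_mul_assoc)

lemma mat_pow_commute: "mat_pow X k ** mat_pow X l = mat_pow X l ** mat_pow X k"
  by (metis add.commute mat_pow_add)

lemma poly_mat_commute:
  assumes "\<And>k. mat_pow X k ** Y = Y ** mat_pow X k"
  shows "poly_mat p X ** Y = Y ** poly_mat p X"
  by (simp add: poly_mat_def matrix_mult_sum_left matrix_mult_sum_right
      matrix_mult_mat_left_commute flip: matrix_mul_assoc assms)

lemma gen_subalg_add: "X \<in> gen_subalg A \<Longrightarrow> Y \<in> gen_subalg A \<Longrightarrow> X + Y \<in> gen_subalg A"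
  unfolding gen_subalg_def by (auto simp flip: poly_mat_add)

lemma gen_subalg_diff: "X \<in> gen_subalg A \<Longrightarrow> Y \<in> gen_subalg A \<Longrightarrow> X - Y \<in> gen_subalg A"
  unfolding gen_subalg_def by (auto simp flip: poly_mat_diff)

lemma gen_subalg_mat_mult: "X \<in> gen_subalg A \<Longrightarrow> mat c ** X \<in> gen_subalg A"
  unfolding gen_subalg_def by (auto simp flip: poly_mat_smult)

lemma gen_subalg_mat_pow: "mat_pow A m \<in> gen_subalg A"
  unfolding gen_subalg_def by (metis (mono_tags) mem_Collect_eq poly_mat_monom)

lemma gen_subalg_zero: "0 \<in> gen_subalg A"
  unfolding gen_subalg_def by (metis (mono_tags) mem_Collect_eq poly_mat_diff diff_self)

lemma gen_subalg_commute: "X \<in> gen_subalg A \<Longrightarrow> Y \<in> gen_subalg A \<Longrightarrow> X ** Y = Y ** X"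
  unfolding gen_subalg_def
  by (auto intro!: poly_mat_commute poly_mat_commute[symmetric] mat_pow_commute)

section \<open>Primitive idempotents of a multiplicity-free matrix\<close>

lemma foldr_factors_mult_eigenvector:
  fixes X :: "'a::field^'n^'n"
  assumes "X *v v = \<mu> *s v"
  shows "foldr (\<lambda>j M. (mat (c j) ** (X - mat (\<theta> j))) ** M) js (mat 1) *v v
     = prod_list (map (\<lambda>j. c j * (\<mu> - \<theta> j)) js) *s v"
proof (induction js)
  case (Cons j js)
  then show ?case
    using assms by (simp flip: matrix_vector_mul_assoc
        add: mat_mult_vector vec.scale matrix_vector_mult_diff_rdistrib vector_ssub_ldistrib
        vector_smult_assoc algebra_simps)
qed simp

lemma prim_idem_mult_eigenvector:
  fixes X :: "'a::field^'n^'n"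
  assumes "mf_eigs X \<theta>" "X *v v = \<theta> k *s v" "i < CARD('n)" "k < CARD('n)"
  shows "prim_idem X \<theta> i *v v = (if k = i then v else 0)"
proof -
  let ?js = "filter (\<lambda>j. j \<noteq> i) [0..<CARD('n)]"
  have inj: "inj_on \<theta> {..<CARD('n)}" using assms(1) by (simp add: mf_eigs_def)
  have "prim_idem X \<theta> i *v v = prod_list (map (\<lambda>j. inverse (\<theta> i - \<theta> j) * (\<theta> k - \<theta> j)) ?js) *s v"
    unfolding prim_idem_def using assms(2) by (rule foldr_factors_mult_eigenvector)
  also have "\<dots> = (if k = i then v else 0)"
  proof (cases "k = i")
    case True
    have "\<theta> i \<noteq> \<theta> j" if "j \<in> set ?js" for j
      using that assms(3) inj by (auto dest: inj_onD)
    then have "map (\<lambda>j. inverse (\<theta> i - \<theta> j) * (\<theta> k - \<theta> j)) ?js = map (\<lambda>_. 1) ?js"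
      using True by (intro map_cong) simp_all
    then show ?thesis using True by (simp add: map_replicate_const)
  next
    case False
    then have "k \<in> set ?js" using assms(4) by simp
    then show ?thesis using False by (force simp: prod_list_zero_iff)
  qed
  finally show ?thesis .
qed

context
  fixes X :: "'a::field^'n^'n" and \<theta> :: "nat \<Rightarrow> 'a" and vv :: "nat \<Rightarrow> 'a^'n"
  assumes mf: "mf_eigs X \<theta>"
    and eigenvector: "\<And>k. k < CARD('n) \<Longrightarrow> vv k \<noteq> 0 \<and> X *v vv k = \<theta> k *s vv k"
begin

lemma prim_idem_mult_eigenbasis:
  "i < CARD('n) \<Longrightarrow> k < CARD('n) \<Longrightarrow> prim_idem X \<theta> i *v vv k = (if k = i then vv k else 0)"
  using prim_idem_mult_eigenvector[OF mf] eigenvector by blast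

lemma prim_idem_mult_eigenbasis_sum:
  assumes "i < CARD('n)"
  shows "prim_idem X \<theta> i *v (\<Sum>k<CARD('n). c k *s vv k) = c i *s vv i"
  using assms
  by (simp add: matrix_vector_mult_sum_right vec.scale prim_idem_mult_eigenbasis if_distrib
      cong: if_cong)

lemma inj_on_eigenbasis: "inj_on vv {..<CARD('n)}"
proof (rule inj_onI)
  fix i k assume "i \<in> {..<CARD('n)}" "k \<in> {..<CARD('n)}" "vv i = vv k"
  then show "i = k" using prim_idem_mult_eigenbasis eigenvector by (metis lessThan_iff)
qed

lemma span_eigenbasis: "vec.span (vv ` {..<CARD('n)}) = UNIV"
proof -
  have independent: "vec.independent (vv ` {..<CARD('n)})"
    unfolding vec.independent_explicit
  proof (intro conjI allI impI ballI)
    fix u v assume u: "(\<Sum>v\<in>vv ` {..<CARD('n)}. u v *s v) = 0" and "v \<in> vv ` {..<CARD('n)}"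
    then obtain i where i: "i < CARD('n)" "v = vv i" by auto
    have "(\<Sum>k<CARD('n). u (vv k) *s vv k) = 0"
      using u by (simp add: sum.reindex inj_on_eigenbasis)
    then have "u (vv i) *s vv i = 0"
      using prim_idem_mult_eigenbasis_sum[OF i(1), of "\<lambda>k. u (vv k)"] by simp
    then show "u v = 0" using eigenvector i by simp
  qed simp
  have "UNIV \<subseteq> vec.span (vv ` {..<CARD('n)})"
    by (rule vec.card_ge_dim_independent[OF subset_UNIV independent])
      (simp add: card_cart_basis card_image inj_on_eigenbasis)
  then show ?thesis by auto
qed

lemma eigenbasis_expansion: obtains c where "w = (\<Sum>k<CARD('n). c k *s vv k)"
proof -
  have "w \<in> vec.span (vv ` {..<CARD('n)})" by (simp add: span_eigenbasis)
  then obtain u where "w = (\<Sum>v\<in>vv ` {..<CARD('n)}. u v *s v)"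
    by (auto simp: vec.span_finite)
  then show ?thesis using that by (simp add: sum.reindex inj_on_eigenbasis)
qed

lemma matrix_eq_on_eigenbasis:
  assumes "\<And>k. k < CARD('n) \<Longrightarrow> M *v vv k = N *v vv k"
  shows "M = N"
proof (rule iffD2[OF matrix_eq], rule allI)
  fix w :: "'a^'n"
  obtain c where "w = (\<Sum>k<CARD('n). c k *s vv k)" by (rule eigenbasis_expansion)
  then show "M *v w = N *v w" by (simp add: matrix_vector_mult_sum_right vec.scale assms)
qed

lemma prim_idem_orthogonal:
  "i < CARD('n) \<Longrightarrow> j < CARD('n) \<Longrightarrow> i \<noteq> j \<Longrightarrow> prim_idem X \<theta> i ** prim_idem X \<theta> j = 0"
  by (rule matrix_eq_on_eigenbasis)
    (simp add: prim_idem_mult_eigenbasis flip: matrix_vector_mul_assoc)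

lemma sum_prim_idem: "(\<Sum>i<CARD('n). prim_idem X \<theta> i) = mat 1"
  by (rule matrix_eq_on_eigenbasis)
    (simp add: matrix_vector_mult_sum_left prim_idem_mult_eigenbasis if_distrib cong: if_cong)

lemma minimal_idempotent_prim_idem:
  assumes i: "i < CARD('n)"
  shows "minimal_idempotent (prim_idem X \<theta> i)"
  unfolding minimal_idempotent_def
proof (intro conjI allI)
  let ?E = "prim_idem X \<theta> i"
  show "?E \<noteq> 0" using prim_idem_mult_eigenbasis[OF i i] eigenvector[OF i] by auto
  show "?E ** ?E = ?E"
    by (rule matrix_eq_on_eigenbasis)
      (simp add: prim_idem_mult_eigenbasis i flip: matrix_vector_mul_assoc)
  fix M
  obtain c where c: "M *v vv i = (\<Sum>k<CARD('n). c k *s vv k)" by (rule eigenbasis_expansion)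
  have "?E ** M ** ?E = mat (c i) ** ?E"
    by (rule matrix_eq_on_eigenbasis)
      (simp add: prim_idem_mult_eigenbasis i c prim_idem_mult_eigenbasis_sum mat_mult_vector
        flip: matrix_vector_mul_assoc)
  then show "\<exists>c. ?E ** M ** ?E = mat c ** ?E" by blast
qed

end

section \<open>Unreduced lower Hessenberg form\<close>

locale unreduced_lower_hessenberg =
  fixes A :: "'a::field^'n^'n" and Es :: "nat \<Rightarrow> 'a^'n^'n" and d :: nat
  assumes minimal: "\<And>i. i \<le> d \<Longrightarrow> minimal_idempotent (Es i)"
    and orthogonal: "\<And>i j. i \<le> d \<Longrightarrow> j \<le> d \<Longrightarrow> i \<noteq> j \<Longrightarrow> Es i ** Es j = 0"
    and sum_eq_1: "(\<Sum>i\<le>d. Es i) = mat 1"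
    and below_subdiagonal: "\<And>i j. i \<le> d \<Longrightarrow> j \<le> d \<Longrightarrow> i > j + 1 \<Longrightarrow> Es i ** A ** Es j = 0"
    and subdiagonal: "\<And>i j. i \<le> d \<Longrightarrow> j \<le> d \<Longrightarrow> i = j + 1 \<Longrightarrow> Es i ** A ** Es j \<noteq> 0"
begin

lemma idempotent: "i \<le> d \<Longrightarrow> Es i ** Es i = Es i"
  using minimal by (simp add: minimal_idempotent_def)

lemma Es_A_mult_eq_sum: "Es j ** A ** M = (\<Sum>l\<le>d. (Es j ** A ** Es l) ** (Es l ** M))"
proof -
  have "Es j ** A ** M = Es j ** A ** (\<Sum>l\<le>d. Es l) ** M" by (simp add: sum_eq_1)
  also have "\<dots> = (\<Sum>l\<le>d. Es j ** A ** (Es l ** Es l) ** M)"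
    by (simp add: matrix_mult_sum_left matrix_mult_sum_right idempotent)
  finally show ?thesis by (simp add: matrix_mul_assoc)
qed

lemma pow_below_diagonal_eq_0: "k < j \<Longrightarrow> j \<le> d \<Longrightarrow> Es j ** mat_pow A k ** Es 0 = 0"
proof (induction k arbitrary: j)
  case 0
  then show ?case by (simp add: orthogonal)
next
  case (Suc k)
  have "(Es j ** A ** Es l) ** (Es l ** mat_pow A k ** Es 0) = 0" if "l \<le> d" for l
    using Suc.IH[OF _ that] below_subdiagonal[OF Suc.prems(2) that] Suc.prems(1)
    by (cases "k < l") (simp_all add: matrix_mul_assoc)
  then show ?case
    using Es_A_mult_eq_sum[of j "mat_pow A k ** Es 0"] by (simp add: matrix_mul_assoc)
qed

lemma pow_diagonal_neq_0: "k \<le> d \<Longrightarrow> Es k ** mat_pow A k ** Es 0 \<noteq> 0"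
proof (induction k)
  case 0
  then show ?case using minimal[of 0] by (simp add: minimal_idempotent_def)
next
  case (Suc k)
  let ?T = "\<lambda>l. (Es (Suc k) ** A ** Es l) ** (Es l ** mat_pow A k ** Es 0)"
  have "?T l = 0" if "l \<le> d" "l \<noteq> k" for l
    using pow_below_diagonal_eq_0[of k l] below_subdiagonal[of "Suc k" l] Suc.prems that
    by (cases "k < l") (simp_all add: matrix_mul_assoc)
  then have "Es (Suc k) ** mat_pow A (Suc k) ** Es 0 = ?T k"
    using Es_A_mult_eq_sum[of "Suc k" "mat_pow A k ** Es 0"] Suc.prems
    by (simp add: matrix_mul_assoc sum.remove[of _ k])
  moreover have "?T k \<noteq> 0"
  proof (rule minimal_idempotent_mult_neq_0[OF minimal])
    show "Es (Suc k) ** A ** Es k ** Es k = Es (Suc k) ** A ** Es k"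
      using Suc.prems by (simp flip: matrix_mul_assoc add: idempotent)
    show "Es k ** (Es k ** mat_pow A k ** Es 0) = Es k ** mat_pow A k ** Es 0"
      using Suc.prems by (simp add: matrix_mul_assoc idempotent)
  qed (use Suc subdiagonal in auto)
  ultimately show ?case by simp
qed

lemma pow_mult_Es0_split: "m \<le> d \<Longrightarrow>
  mat_pow A m ** Es 0 = (\<Sum>j<m. Es j) ** mat_pow A m ** Es 0 + Es m ** mat_pow A m ** Es 0"
proof -
  assume m: "m \<le> d"
  have "mat_pow A m ** Es 0 = (\<Sum>j\<le>d. Es j) ** mat_pow A m ** Es 0" by (simp add: sum_eq_1)
  also have "\<dots> = (\<Sum>j\<le>d. Es j ** mat_pow A m ** Es 0)" by (simp add: matrix_mult_sum_left)
  also have "\<dots> = (\<Sum>j<Suc m. Es j ** mat_pow A m ** Es 0)"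
    by (rule sum.mono_neutral_right) (use m in \<open>auto simp: pow_below_diagonal_eq_0\<close>)
  also have "\<dots> = (\<Sum>j<m. Es j) ** mat_pow A m ** Es 0 + Es m ** mat_pow A m ** Es 0"
    by (simp add: matrix_mult_sum_left)
  finally show ?thesis .
qed

lemma partial_sum_mult_Es0: "m \<le> Suc d \<Longrightarrow> \<exists>X\<in>gen_subalg A. (\<Sum>j<m. Es j) ** M ** Es 0 = X ** Es 0"
proof (induction m arbitrary: M)
  case 0
  show ?case using gen_subalg_zero by force
next
  case (Suc m)
  then have m: "m \<le> d" by simp
  obtain X where X: "X \<in> gen_subalg A" "(\<Sum>j<m. Es j) ** M ** Es 0 = X ** Es 0"
    using Suc by force
  obtain Y where Y: "Y \<in> gen_subalg A" "(\<Sum>j<m. Es j) ** mat_pow A m ** Es 0 = Y ** Es 0"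
    using Suc by force
  have "Es m ** (Es m ** mat_pow A m ** Es 0) ** Es 0 = Es m ** mat_pow A m ** Es 0"
    using m by (simp flip: matrix_mul_assoc add: idempotent) (simp add: matrix_mul_assoc idempotent)
  then obtain c where c: "Es m ** M ** Es 0 = mat c ** (Es m ** mat_pow A m ** Es 0)"
    using minimal_idempotent_corner_scalar minimal m pow_diagonal_neq_0 by blast
  have "Es m ** mat_pow A m ** Es 0 = (mat_pow A m - Y) ** Es 0"
    using pow_mult_Es0_split[OF m] Y(2) by (simp add: matrix_diff_rdistrib)
  then have "(\<Sum>j<Suc m. Es j) ** M ** Es 0 = (X + mat c ** (mat_pow A m - Y)) ** Es 0"
    using X(2) c by (simp add: matrix_add_rdistrib matrix_mul_assoc)
  moreover have "X + mat c ** (mat_pow A m - Y) \<in> gen_subalg A"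
    using X(1) Y(1) by (intro gen_subalg_add gen_subalg_mat_mult gen_subalg_diff gen_subalg_mat_pow)
  ultimately show ?case by blast
qed

lemma mult_Es0_in_gen_subalg: "\<exists>X\<in>gen_subalg A. M ** Es 0 = X ** Es 0"
  using partial_sum_mult_Es0[of "Suc d" M] by (simp add: lessThan_Suc_atMost sum_eq_1)

end

lemma unreduced_lower_hessenberg_idem_ordering:
  fixes A As :: "'a::field^'n^'n"
  assumes d: "CARD('n) = d + 1" and Es: "idem_ordering As Es"
    and "\<And>i j. i \<le> d \<Longrightarrow> j \<le> d \<Longrightarrow> i > j + 1 \<Longrightarrow> Es i ** A ** Es j = 0"
    and "\<And>i j. i \<le> d \<Longrightarrow> j \<le> d \<Longrightarrow> i = j + 1 \<Longrightarrow> Es i ** A ** Es j \<noteq> 0"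
  shows "unreduced_lower_hessenberg A Es d"
proof -
  obtain \<theta> where \<theta>: "mf_eigs As \<theta>" and Es_eq: "\<And>i. i < CARD('n) \<Longrightarrow> Es i = prim_idem As \<theta> i"
    using Es unfolding idem_ordering_def by blast
  obtain vv where vv: "\<And>k. k < CARD('n) \<Longrightarrow> vv k \<noteq> 0 \<and> As *v vv k = \<theta> k *s vv k"
    using \<theta> unfolding mf_eigs_def by metis
  have index: "i \<le> d \<longleftrightarrow> i < CARD('n)" for i using d by auto
  have "(\<Sum>i\<le>d. Es i) = (\<Sum>i<CARD('n). prim_idem As \<theta> i)"
    by (simp add: d lessThan_Suc_atMost Es_eq index)
  then show ?thesis
    using assms(3,4) minimal_idempotent_prim_idem[OF \<theta> vv] prim_idem_orthogonal[OF \<theta> vv]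
      sum_prim_idem[OF \<theta> vv]
    by unfold_locales (simp_all add: index Es_eq)
qed

theorem corollary3p3:
  fixes A As :: "('a::field)^'n^'n"
    and E Es :: "nat \<Rightarrow> 'a^'n^'n"
    and d :: nat
    and sc :: "'a \<Rightarrow> 'v::ab_group_add \<Rightarrow> 'v"
    and act :: "'a^'n^'n \<Rightarrow> 'v \<Rightarrow> 'v"
    and v0 :: 'v
  assumes d: "CARD('n) = d + 1"
    and mfA: "multiplicity_free A" and mfAs: "multiplicity_free As"
    and E: "idem_ordering A E" and Es: "idem_ordering As Es"
    and V: "irreducible_module sc act"
    and zero: "\<And>i j. i \<le> d \<Longrightarrow> j \<le> d \<Longrightarrow> i > j + 1 \<Longrightarrow> Es i ** A ** Es j = 0"
    and nonzero: "\<And>i j. i \<le> d \<Longrightarrow> j \<le> d \<Longrightarrow> i = j + 1 \<Longrightarrow> Es i ** A ** Es j \<noteq> 0"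
    and v0: "v0 \<noteq> 0" "v0 \<in> range (act (Es 0))"
  shows "bij_betw (\<lambda>X. act X v0) (gen_subalg A) UNIV"
proof -
  interpret unreduced_lower_hessenberg A Es d
    using d Es zero nonzero by (rule unreduced_lower_hessenberg_idem_ordering)
  have alg: "alg_module sc act" using V by (simp add: irreducible_module_def)
  have F: "minimal_idempotent (Es 0)" by (rule minimal[OF le0])
  then have idem: "Es 0 ** Es 0 = Es 0" by (simp add: minimal_idempotent_def)
  show ?thesis
    unfolding bij_betw_def
  proof
    show "inj_on (\<lambda>X. act X v0) (gen_subalg A)"
      by (rule alg_module_inj_on_act[OF alg F v0 gen_subalg_diff gen_subalg_commute
            mult_Es0_in_gen_subalg])
    show "(\<lambda>X. act X v0) ` gen_subalg A = UNIV"
      by (rule irreducible_module_act_image_eq_UNIV[OF V idem v0 mult_Es0_in_gen_subalg])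
  qed
qed

end
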